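(* Let $0<i_1<i_2<\cdots<i_L$ be integers and let $\mathcal S=\{x_0,x_{i_1},\ldots,x_{i_L}\}$, with associated restricted right-arm rotation distance $d_{RRA}^{\mathcal S}$ (rotations allowed only at the root and at the right-arm nodes at levels $i_1,\ldots,i_L$). Let $T_1,T_2$ be finite rooted binary trees with the same number of nodes, forming a (not necessarily reduced) tree pair diagram $(T_1,T_2)$ representing $w\in F$, and let $w'=x_{a_1}^{r_1}\cdots x_{a_k}^{r_k}x_{b_l}^{-s_l}\cdots x_{b_1}^{-s_1}$ be the partially reduced normal form of maximum length of $w$ obtained from $(T_1,T_2)$. If some $x_t^{\pm1}$ with $1\le t\le i_1-1$ appears in $w'$, then $d_{RRA}^{\mathcal S}(T_1,T_2)$ is not defined. Conversely, if no $x_t^{\pm1}$ with $1\le t\le i_1-1$ appears in $w'$, then $d_{RRA}^{\mathcal S}(T_1,T_2)$ is defined.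
   Context: Trees: finite rooted binary trees, each internal vertex (node) having a left and a right child; a tree with $n$ nodes has $n+1$ leaves numbered $0,\ldots,n$ from left to right. The right arm consists of the root and the nodes reachable from it by right edges only; the level of a node is its distance from the root. Right rotation at a node $N$ whose left child $M$ is a node (with $A,B$ the subtrees of $M$ and $C$ the right subtree of $N$) replaces the subtree at $N$ by one whose root has left subtree $A$ and right child a node with subtrees $B,C$; left rotation is the inverse. Thompson's group $F=\langle x_0,x_1,\ldots\mid x_i^{-1}x_nx_i=x_{n+1}\ (i<n)\rangle$. The leaf exponent of leaf $k$ is the length of the longest upward path of left edges from leaf $k$ none of whose vertices lies on the right arm. The word associated to a tree pair diagram $(T_1,T_2)$ (trees with the same number $n$ of nodes) is $x_0^{f_0}\cdots x_n^{f_n}x_n^{-e_n}\cdots x_0^{-e_0}$ with $e_i$, $f_i$ the leaf exponents of leaf $i$ in $T_1$, $T_2$; $(T_1,T_2)$ represents the element this word defines. This word is a normal form $x_{a_1}^{r_1}\cdots x_{a_k}^{r_k}x_{b_l}^{-s_l}\cdots x_{b_1}^{-s_1}$ ($r_i,s_i>0$, $0\le a_1<\cdots<a_k$, $0\le b_1<\cdots<b_l$), not necessarily unique. Such a normal form is partially reduced if for every $i>0$, whenever both $x_i$ and $x_i^{-1}$ occur, at least one of $x_{i+1}^{\pm1}$ occurs (no condition is imposed for $i=0$). The partially reduced normal form of maximum length is obtained from the associated word by repeatedly applying the reductions $u\,x_i\,\phi(v)\,x_i^{-1}\,z\mapsto u\,v\,z$ only for $i>0$, where $\phi(x_j)=x_{j+1}$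 and $\phi(v)$ involves only generators of index at least $i+2$. Restricted right-arm rotation distance $d_{RRA}^{\mathcal S}(T_1,T_2)$: the minimal number of rotations, each at a right-arm node at one of the levels $0,i_1,\ldots,i_L$, transforming $T_1$ into $T_2$ (trees keep their number of nodes throughout); it is defined if such a sequence exists. *)

theory Defs
  imports Main
begin

datatype tree = Lf | Nd tree tree

fun num_nodes :: "tree \<Rightarrow> nat" where
  "num_nodes Lf = 0"
| "num_nodes (Nd l r) = Suc (num_nodes l + num_nodes r)"

fun rot_right :: "tree \<Rightarrow> tree option" where
  "rot_right (Nd (Nd a b) c) = Some (Nd a (Nd b c))"
| "rot_right _ = None"

fun rot_left :: "tree \<Rightarrow> tree option" where
  "rot_left (Nd a (Nd b c)) = Some (Nd (Nd a b) c)"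
| "rot_left _ = None"

text \<open>Apply an operation at the right-arm vertex of level j (reached from the root
  by j right edges), keeping the rest of the tree.\<close>
fun at_arm_level :: "nat \<Rightarrow> (tree \<Rightarrow> tree option) \<Rightarrow> tree \<Rightarrow> tree option" where
  "at_arm_level 0 f t = f t"
| "at_arm_level (Suc j) f (Nd l r) = map_option (Nd l) (at_arm_level j f r)"
| "at_arm_level (Suc j) f Lf = None"

definition rra_step :: "nat set \<Rightarrow> tree \<Rightarrow> tree \<Rightarrow> bool" where
  "rra_step Lv t t' \<longleftrightarrow>
     (\<exists>j\<in>Lv. at_arm_level j rot_right t = Some t' \<or> at_arm_level j rot_left t = Some t')"

definition rra_defined :: "nat set \<Rightarrow> tree \<Rightarrow> tree \<Rightarrow> bool" where
  "rra_defined Lv T1 T2 \<longleftrightarrow> (rra_step Lv)\<^sup>*\<^sup>* T1 T2"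

definition d_rra :: "nat set \<Rightarrow> tree \<Rightarrow> tree \<Rightarrow> nat" where
  "d_rra Lv T1 T2 = (LEAST k. (rra_step Lv ^^ k) T1 T2)"

text \<open>Leaf exponents (leaves listed left to right) of a subtree hanging off the right
  arm: upward left-edge paths stay inside the subtree (its parent is on the right arm).\<close>
fun sub_exps :: "tree \<Rightarrow> nat list" where
  "sub_exps Lf = [0]"
| "sub_exps (Nd l r) = (case sub_exps l of [] \<Rightarrow> [] | e # es \<Rightarrow> Suc e # es) @ sub_exps r"

fun leaf_exps :: "tree \<Rightarrow> nat list" where
  "leaf_exps Lf = [0]"
| "leaf_exps (Nd l r) = sub_exps l @ leaf_exps r"

text \<open>A normal form x_{a_1}^{r_1}...x_{a_k}^{r_k} x_{b_l}^{-s_l}...x_{b_1}^{-s_1} is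
  represented by the pair (p, q) of exponent functions: p i is the exponent of x_i in the
  positive part, q i the exponent of x_i^{-1} in the negative part.\<close>
type_synonym nform = "(nat \<Rightarrow> nat) \<times> (nat \<Rightarrow> nat)"

definition exps_fun :: "nat list \<Rightarrow> nat \<Rightarrow> nat" where
  "exps_fun es i = (if i < length es then es ! i else 0)"

text \<open>Associated word of (T1,T2): x_0^{f_0}...x_n^{f_n} x_n^{-e_n}...x_0^{-e_0}.\<close>
definition assoc_word :: "tree \<Rightarrow> tree \<Rightarrow> nform" where
  "assoc_word T1 T2 = (exps_fun (leaf_exps T2), exps_fun (leaf_exps T1))"

text \<open>Reduction u x_i phi(v) x_i^{-1} z to u v z, only for i > 0, where phi(v) only
  involves generators of index at least i+2.\<close>
definition reduce_step :: "nform \<Rightarrow> nform \<Rightarrow> bool" where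
  "reduce_step w w' \<longleftrightarrow>
     (\<exists>i>0. fst w i > 0 \<and> snd w i > 0 \<and> fst w (Suc i) = 0 \<and> snd w (Suc i) = 0 \<and>
        w' = ((\<lambda>j. if j < i then fst w j else if j = i then fst w i - 1 else fst w (Suc j)),
              (\<lambda>j. if j < i then snd w j else if j = i then snd w i - 1 else snd w (Suc j))))"

definition partially_reduced :: "nform \<Rightarrow> bool" where
  "partially_reduced w \<longleftrightarrow>
     (\<forall>i>0. fst w i > 0 \<and> snd w i > 0 \<longrightarrow> fst w (Suc i) > 0 \<or> snd w (Suc i) > 0)"

definition occurs :: "nform \<Rightarrow> nat \<Rightarrow> bool" where
  "occurs w t \<longleftrightarrow> fst w t > 0 \<or> snd w t > 0"

end

theory Submission
  imports Defs
begin

(* Let e be the leaf exponent sequence of a tree and D(u) = u - (e_1 + ... + e_u).  A subtree with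
   m nodes hanging from the right arm has m + 1 leaves of total exponent m, and each of its proper
   initial segments contributes at most 0 to D.  So, when the left child of the root is a leaf, the
   leaves 1, ..., t with D(u) < K for all u < t (the window) are those hanging from the right arm at
   levels 1, ..., K.  A rotation at the root only changes e_0, and a rotation at a level above
   K = i_1 - 1 only changes leaves beyond the window, so the window and its exponents are invariant
   under the allowed rotations.  Conversely, conjugating by root rotations turns the rotation at
   level i_1 into a rotation at any deeper level, and rotations at the root and at all levels
   >= i_1 bring every tree to a canonical form (the left child of the root a leaf, a right vine
   below level K) that is determined by its window and its number of nodes.  So d_RRA(T1, T2) is
   defined iff the exponent sequences of T1 and T2 agree on the window.

   On the word side, a cancellation x_i phi(v) x_i^-1 -> v deletes the index i from both exponent
   sequences, which preserves agreement on the window.  In a partially reduced form agreeing on the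
   window, an occurrence of x_t with t <= K forces occurrences of x_(t+1), x_(t+2), ... all inside
   the window, which is impossible; and if no such x_t occurs, D reaches K before any nonzero
   exponent, so both exponent sequences vanish on the window. *)

section \<open>Agreement of exponent sequences on a window\<close>

fun deficit :: "(nat \<Rightarrow> nat) \<Rightarrow> nat \<Rightarrow> int" where
  "deficit e 0 = 0"
| "deficit e (Suc u) = deficit e u + 1 - int (e (Suc u))"

definition in_window :: "nat \<Rightarrow> (nat \<Rightarrow> nat) \<Rightarrow> nat \<Rightarrow> bool" where
  "in_window K e t \<longleftrightarrow> (\<forall>u<t. deficit e u < int K)"

definition window_eq :: "nat \<Rightarrow> (nat \<Rightarrow> nat) \<Rightarrow> (nat \<Rightarrow> nat) \<Rightarrow> bool" where
  "window_eq K a b \<longleftrightarrow> (\<forall>t. 1 \<le> t \<longrightarrow> in_window K a t \<longrightarrow> a t = b t)"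

lemma deficit_cong: "(\<And>s. 1 \<le> s \<Longrightarrow> s \<le> u \<Longrightarrow> a s = b s) \<Longrightarrow> deficit a u = deficit b u"
  by (induction u) auto

lemma deficit_le: "deficit e u \<le> int u"
  by (induction u) auto

lemma deficit_eq_if_zero: "(\<And>s. 1 \<le> s \<Longrightarrow> s \<le> u \<Longrightarrow> e s = 0) \<Longrightarrow> deficit e u = int u"
  by (induction u) auto

lemma in_window_antimono: "in_window K e t \<Longrightarrow> s \<le> t \<Longrightarrow> in_window K e s"
  unfolding in_window_def by auto

lemma in_window_Suc: "in_window K e (Suc t) \<longleftrightarrow> in_window K e t \<and> deficit e t < int K"
  unfolding in_window_def by (auto simp: less_Suc_eq)

lemma window_eq_in_window_iff:
  assumes "window_eq K a b"
  shows "in_window K a t \<longleftrightarrow> in_window K b t"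
proof (induction t)
  case 0
  then show ?case by (simp add: in_window_def)
next
  case (Suc t)
  show ?case
  proof (cases "in_window K a t")
    case True
    have "deficit a t = deficit b t"
      using assms True in_window_antimono unfolding window_eq_def by (intro deficit_cong) blast
    then show ?thesis using Suc by (simp add: in_window_Suc)
  next
    case False
    then show ?thesis using Suc by (simp add: in_window_Suc)
  qed
qed

lemma window_eq_refl: "window_eq K a a"
  by (simp add: window_eq_def)

lemma window_eq_sym:
  assumes "window_eq K a b"
  shows "window_eq K b a"
  using assms window_eq_in_window_iff[OF assms] unfolding window_eq_def by simp

lemma window_eq_trans:
  assumes "window_eq K a b" "window_eq K b c"
  shows "window_eq K a c"
  using assms window_eq_in_window_iff[OF assms(1)] unfolding window_eq_def by simp

section \<open>Cancellations in normal forms\<close>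

definition delete_at :: "nat \<Rightarrow> (nat \<Rightarrow> nat) \<Rightarrow> nat \<Rightarrow> nat" where
  "delete_at i p j = (if j < i then p j else if j = i then p i - 1 else p (Suc j))"

lemma reduce_step_iff:
  "reduce_step w w' \<longleftrightarrow>
     (\<exists>i>0. fst w i > 0 \<and> snd w i > 0 \<and> fst w (Suc i) = 0 \<and> snd w (Suc i) = 0 \<and>
        w' = (delete_at i (fst w), delete_at i (snd w)))"
  unfolding reduce_step_def delete_at_def by simp

lemma deficit_delete_at:
  assumes "0 < i" "0 < p i" "p (Suc i) = 0"
  shows "deficit (delete_at i p) u = (if u < i then deficit p u else deficit p (Suc u))"
proof (induction u)
  case 0
  then show ?case using assms(1) by simp
next
  case (Suc u)
  consider "Suc u < i" | "Suc u = i" | "i < Suc u" by linarith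
  then show ?case
  proof cases
    case 1
    then show ?thesis using Suc.IH by (simp add: delete_at_def)
  next
    case 2
    then show ?thesis using Suc.IH assms(2,3) by (auto simp: delete_at_def of_nat_diff)
  next
    case 3
    then show ?thesis using Suc.IH by (simp add: delete_at_def)
  qed
qed

lemma in_window_delete_at:
  assumes "0 < i" "0 < p i" "p (Suc i) = 0"
  shows "in_window K (delete_at i p) t \<longleftrightarrow> in_window K p (if t \<le> i then t else Suc t)"
proof (cases "t \<le> i")
  case True
  then show ?thesis using deficit_delete_at[OF assms] by (simp add: in_window_def)
next
  case False
  obtain m where m: "i = Suc m" using assms(1) not0_implies_Suc by blast
  have D: "deficit (delete_at i p) u = (if u < i then deficit p u else deficit p (Suc u))" for u
    using deficit_delete_at[OF assms] .
  have "(\<forall>u<t. deficit (delete_at i p) u < int K) \<longleftrightarrow> (\<forall>u<Suc t. deficit p u < int K)"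
  proof
    assume L: "\<forall>u<t. deficit (delete_at i p) u < int K"
    have below_i: "deficit p u < int K" if "u < i" for u
      using L D that False by (metis not_le order.strict_trans)
    have at_i: "deficit p i < int K"
      using below_i[of m] assms(2) m by simp
    have above_i: "deficit p (Suc v) < int K" if "i \<le> v" "v < t" for v
      using L D that by (metis not_le)
    show "\<forall>u<Suc t. deficit p u < int K"
    proof (intro allI impI)
      fix u assume "u < Suc t"
      then show "deficit p u < int K"
        using below_i at_i above_i[of "u - 1"] by (cases "u < i"; cases "u = i") auto
    qed
  next
    assume R: "\<forall>u<Suc t. deficit p u < int K"
    show "\<forall>u<t. deficit (delete_at i p) u < int K"
    proof (intro allI impI)
      fix u assume "u < t"
      then show "deficit (delete_at i p) u < int K"
        using R[rule_format, of u] R[rule_format, of "Suc u"] D[of u]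
        by (auto simp del: deficit.simps)
    qed
  qed
  then show ?thesis using False by (simp add: in_window_def)
qed

lemma window_eq_delete_at_iff:
  assumes "0 < i" "0 < p i" "0 < q i" "p (Suc i) = 0" "q (Suc i) = 0"
  shows "window_eq K (delete_at i p) (delete_at i q) \<longleftrightarrow> window_eq K p q"
proof -
  let ?s = "\<lambda>t. if t \<le> i then t else Suc t"
  have win: "in_window K (delete_at i p) t \<longleftrightarrow> in_window K p (?s t)" for t
    using in_window_delete_at[OF assms(1,2,4)] .
  have val: "delete_at i p t = delete_at i q t \<longleftrightarrow> p (?s t) = q (?s t)" for t
    using assms(2,3) by (auto simp: delete_at_def)
  show ?thesis
  proof
    assume eq: "window_eq K (delete_at i p) (delete_at i q)"
    show "window_eq K p q" unfolding window_eq_def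
    proof (intro allI impI)
      fix s assume s: "1 \<le> s" "in_window K p s"
      show "p s = q s"
      proof (cases "s = Suc i")
        case True
        then show ?thesis using assms(4,5) by simp
      next
        case False
        define t where "t = (if s \<le> i then s else s - 1)"
        have t: "?s t = s" "1 \<le> t" using False s(1) assms(1) by (auto simp: t_def)
        then have "in_window K (delete_at i p) t" using win[of t] s(2) by simp
        then have "delete_at i p t = delete_at i q t" using eq t(2) unfolding window_eq_def by blast
        then show ?thesis using val[of t] t(1) by simp
      qed
    qed
  next
    assume "window_eq K p q"
    then show "window_eq K (delete_at i p) (delete_at i q)"
      using win val unfolding window_eq_def by simp
  qed
qed

lemma reduce_step_window_eq:
  assumes "reduce_step w w'"
  shows "window_eq K (fst w') (snd w') \<longleftrightarrow> window_eq K (fst w) (snd w)"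
  using assms window_eq_delete_at_iff unfolding reduce_step_iff by auto

lemma reduce_steps_window_eq:
  assumes "reduce_step\<^sup>*\<^sup>* w w'"
  shows "window_eq K (fst w') (snd w') \<longleftrightarrow> window_eq K (fst w) (snd w)"
  using assms by (induction rule: rtranclp_induct) (auto simp: reduce_step_window_eq)

lemma reduce_steps_vanish_beyond:
  assumes "reduce_step\<^sup>*\<^sup>* w w'" "\<forall>j\<ge>N. fst w j = 0 \<and> snd w j = 0"
  shows "\<forall>j\<ge>N. fst w' j = 0 \<and> snd w' j = 0"
  using assms
proof (induction rule: rtranclp_induct)
  case base
  then show ?case by simp
next
  case (step y z)
  then obtain i where i: "fst y i > 0" and z: "z = (delete_at i (fst y), delete_at i (snd y))"
    unfolding reduce_step_iff by blast
  have "i < N" using step.IH step.prems i by (metis gr_implies_not0 not_le)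
  then show ?case using step z by (auto simp: delete_at_def)
qed

lemma window_eq_if_no_occurrence:
  assumes "\<not> (\<exists>t. 1 \<le> t \<and> t \<le> K \<and> occurs w t)"
  shows "window_eq K (fst w) (snd w)"
  unfolding window_eq_def
proof (intro allI impI)
  fix t assume t: "1 \<le> t" "in_window K (fst w) t"
  show "fst w t = snd w t"
  proof (cases "t \<le> K")
    case True
    then show ?thesis using assms t(1) unfolding occurs_def by auto
  next
    case False
    have "deficit (fst w) K = int K"
      using assms unfolding occurs_def by (intro deficit_eq_if_zero) auto
    moreover have "deficit (fst w) K < int K" using t(2) False unfolding in_window_def by auto
    ultimately show ?thesis by simp
  qed
qed

lemma partially_reduced_occurs_propagate:
  assumes eq: "window_eq K (fst w) (snd w)" and red: "partially_reduced w"
    and t: "1 \<le> t" "in_window K (fst w) t" "occurs w t"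
  shows "in_window K (fst w) (t + m) \<and> occurs w (t + m)"
proof (induction m)
  case 0
  then show ?case using t by simp
next
  case (Suc m)
  have win: "in_window K (fst w) (t + m)" and "occurs w (t + m)" using Suc.IH by auto
  then have pos: "fst w (t + m) > 0" "snd w (t + m) > 0"
    using eq t(1) unfolding window_eq_def occurs_def by (metis le_add1 order_trans)+
  obtain v where v: "t + m = Suc v" using t(1) by (cases "t + m") auto
  have "deficit (fst w) (t + m) < int K" using win pos(1) unfolding v in_window_def by auto
  then have "in_window K (fst w) (Suc (t + m))" using win in_window_Suc by blast
  moreover have "occurs w (Suc (t + m))"
    using red pos v unfolding partially_reduced_def occurs_def by auto
  ultimately show ?case by simp
qed

lemma no_occurrence_if_window_eq:
  assumes "window_eq K (fst w) (snd w)" "partially_reduced w"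
    and "\<forall>j\<ge>N. fst w j = 0 \<and> snd w j = 0"
  shows "\<not> (\<exists>t. 1 \<le> t \<and> t \<le> K \<and> occurs w t)"
proof
  assume "\<exists>t. 1 \<le> t \<and> t \<le> K \<and> occurs w t"
  then obtain t where t: "1 \<le> t" "t \<le> K" "occurs w t" by blast
  have "in_window K (fst w) t"
    unfolding in_window_def using deficit_le t(2)
    by (meson le_less_trans of_nat_less_iff order_less_le_trans)
  then have "occurs w (t + N)"
    using partially_reduced_occurs_propagate[OF assms(1,2) t(1) _ t(3)] by blast
  then show False using assms(3) unfolding occurs_def by simp
qed

abbreviation leaf_exp :: "tree \<Rightarrow> nat \<Rightarrow> nat" where
  "leaf_exp T \<equiv> exps_fun (leaf_exps T)"

lemma sub_exps_not_Nil: "sub_exps t \<noteq> []"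
  by (induction t) (auto split: list.split)

declare sub_exps.simps(2) [simp del]

lemma sub_exps_Nd [simp]: "sub_exps (Nd l r) = Suc (hd (sub_exps l)) # tl (sub_exps l) @ sub_exps r"
  using sub_exps_not_Nil[of l] by (cases "sub_exps l") (auto simp: sub_exps.simps(2))

lemma length_sub_exps: "length (sub_exps t) = Suc (num_nodes t)"
proof (induction t)
  case Lf
  then show ?case by simp
next
  case (Nd l r)
  then show ?case using sub_exps_not_Nil[of l] by simp
qed

lemma sum_list_sub_exps: "sum_list (sub_exps t) = num_nodes t"
proof (induction t)
  case Lf
  then show ?case by simp
next
  case (Nd l r)
  have "sum_list (sub_exps l) = hd (sub_exps l) + sum_list (tl (sub_exps l))"
    using sub_exps_not_Nil[of l] by (cases "sub_exps l") simp_all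
  then show ?case using Nd.IH by simp
qed

lemma length_leaf_exps: "length (leaf_exps t) = Suc (num_nodes t)"
  by (induction t) (auto simp: length_sub_exps)

lemma sub_exps_append_inj: "sub_exps a @ X = sub_exps b @ Y \<Longrightarrow> a = b \<and> X = Y"
proof (induction a arbitrary: b X Y)
  case Lf
  then show ?case by (cases b) auto
next
  case (Nd a1 a2)
  obtain b1 b2 where b: "b = Nd b1 b2" using Nd.prems by (cases b) auto
  have "hd (sub_exps a1) # tl (sub_exps a1) @ sub_exps a2 @ X =
        hd (sub_exps b1) # tl (sub_exps b1) @ sub_exps b2 @ Y"
    using Nd.prems unfolding b by simp
  then have "sub_exps a1 @ (sub_exps a2 @ X) = sub_exps b1 @ (sub_exps b2 @ Y)"
    unfolding append_Cons[symmetric] list.collapse[OF sub_exps_not_Nil] by simp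
  then have "a1 = b1" and "sub_exps a2 @ X = sub_exps b2 @ Y" using Nd.IH(1) by simp_all
  then show ?case using Nd.IH(2) b by simp
qed

lemma leaf_exps_inj: "leaf_exps t1 = leaf_exps t2 \<Longrightarrow> t1 = t2"
proof (induction t1 arbitrary: t2)
  case Lf
  have "num_nodes t2 = 0" using length_leaf_exps[of t2] Lf.prems[symmetric] by simp
  then show ?case by (cases t2) auto
next
  case (Nd l r)
  show ?case
  proof (cases t2)
    case Lf
    then show ?thesis using Nd.prems length_leaf_exps[of "Nd l r"] by simp
  next
    case (Nd l2 r2)
    then have "sub_exps l @ leaf_exps r = sub_exps l2 @ leaf_exps r2" using Nd.prems by simp
    then show ?thesis using sub_exps_append_inj Nd.IH(2) \<open>t2 = Nd l2 r2\<close> by blast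
  qed
qed

lemma exps_fun_Cons_Suc: "exps_fun (x # M) (Suc u) = exps_fun M u"
  by (simp add: exps_fun_def)

lemma deficit_exps_fun_Cons: "deficit (exps_fun (x # M)) u = int u - int (sum_list (take u M))"
  by (induction u) (auto simp: exps_fun_def take_Suc_conv_app_nth)

section \<open>Rotations preserve the window\<close>

lemma rot_left_eq_Some_iff: "rot_left t' = Some t \<longleftrightarrow> rot_right t = Some t'"
  by (cases t rule: rot_right.cases; cases t' rule: rot_left.cases) auto

lemma at_arm_level_Suc_eq_Some:
  "at_arm_level (Suc j) f t = Some t' \<longleftrightarrow>
     (\<exists>l r r'. t = Nd l r \<and> t' = Nd l r' \<and> at_arm_level j f r = Some r')"
  by (cases t) auto

lemma at_arm_level_rot_left_iff:
  "at_arm_level j rot_left t' = Some t \<longleftrightarrow> at_arm_level j rot_right t = Some t'"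
  by (induction j arbitrary: t t') (auto simp: rot_left_eq_Some_iff at_arm_level_Suc_eq_Some)

lemma symp_rra_step: "symp (rra_step Lv)"
  unfolding symp_def rra_step_def at_arm_level_rot_left_iff by blast

lemma rra_stepE:
  assumes "rra_step Lv t t'"
  obtains j where "j \<in> Lv"
    and "at_arm_level j rot_right t = Some t' \<or> at_arm_level j rot_right t' = Some t"
  using assms unfolding rra_step_def at_arm_level_rot_left_iff by blast

lemma rra_step_if_rot_right: "j \<in> Lv \<Longrightarrow> at_arm_level j rot_right t = Some t' \<Longrightarrow> rra_step Lv t t'"
  unfolding rra_step_def by blast

lemma num_nodes_at_arm_level:
  assumes "at_arm_level j f t = Some t'" "\<And>s s'. f s = Some s' \<Longrightarrow> num_nodes s' = num_nodes s"
  shows "num_nodes t' = num_nodes t"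
  using assms by (induction j f t arbitrary: t' rule: at_arm_level.induct) auto

lemma num_nodes_rot_right: "rot_right s = Some s' \<Longrightarrow> num_nodes s' = num_nodes s"
  by (cases s rule: rot_right.cases) auto

lemma rra_step_num_nodes:
  assumes "rra_step Lv t t'"
  shows "num_nodes t' = num_nodes t"
proof -
  obtain j where "at_arm_level j rot_right t = Some t' \<or> at_arm_level j rot_right t' = Some t"
    using assms by (rule rra_stepE)
  then show ?thesis using num_nodes_at_arm_level[OF _ num_nodes_rot_right] by fastforce
qed

lemma rra_steps_num_nodes: "(rra_step Lv)\<^sup>*\<^sup>* t t' \<Longrightarrow> num_nodes t' = num_nodes t"
  by (induction rule: rtranclp_induct) (auto dest: rra_step_num_nodes)

lemma rot_right_leaf_exps:
  assumes "rot_right t = Some t'"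
  shows "\<exists>x y M. leaf_exps t = x # M \<and> leaf_exps t' = y # M"
proof -
  obtain a b c where t: "t = Nd (Nd a b) c" "t' = Nd a (Nd b c)"
    using assms by (cases t rule: rot_right.cases) auto
  then show ?thesis using sub_exps_not_Nil[of a] by (cases "sub_exps a") auto
qed

lemma at_arm_level_leaf_exps_prefix:
  "at_arm_level j f t = Some t' \<Longrightarrow>
     \<exists>P X X'. leaf_exps t = P @ X \<and> leaf_exps t' = P @ X' \<and>
       int j \<le> int (length P) - int (sum_list P)"
proof (induction j f t arbitrary: t' rule: at_arm_level.induct)
  case (1 f t)
  show ?case
    by (rule exI[of _ "[]"], rule exI[of _ "leaf_exps t"], rule exI[of _ "leaf_exps t'"]) simp
next
  case (2 j f l r)
  then obtain r' where r': "at_arm_level j f r = Some r'" "t' = Nd l r'" by auto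
  then obtain P X X' where P: "leaf_exps r = P @ X" "leaf_exps r' = P @ X'"
    "int j \<le> int (length P) - int (sum_list P)" using 2(1) by blast
  show ?case
  proof (intro exI conjI)
    show "leaf_exps (Nd l r) = (sub_exps l @ P) @ X" "leaf_exps t' = (sub_exps l @ P) @ X'"
      using P r'(2) by simp_all
    show "int (Suc j) \<le> int (length (sub_exps l @ P)) - int (sum_list (sub_exps l @ P))"
      using P(3) by (simp add: length_sub_exps sum_list_sub_exps)
  qed
next
  case (3 j f)
  then show ?case by simp
qed

lemma window_eq_exps_fun_Cons: "window_eq K (exps_fun (x # M)) (exps_fun (y # M))"
  unfolding window_eq_def
proof (intro allI impI)
  fix t :: nat assume "1 \<le> t"
  then obtain u where "t = Suc u" by (cases t) auto
  then show "exps_fun (x # M) t = exps_fun (y # M) t" by (simp add: exps_fun_Cons_Suc)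
qed

lemma window_eq_exps_fun_append:
  assumes "int K < int (length P) - int (sum_list P)"
  shows "window_eq K (exps_fun (P @ X)) (exps_fun (P @ X'))"
  unfolding window_eq_def
proof (intro allI impI)
  fix t assume t: "1 \<le> t" "in_window K (exps_fun (P @ X)) t"
  obtain x M where P: "P = x # M" using assms by (cases P) auto
  have "t < length P"
  proof (rule ccontr)
    assume "\<not> t < length P"
    then have "length M < t" using P by simp
    moreover have "\<forall>u<t. deficit (exps_fun (x # M @ X)) u < int K"
      using t(2) unfolding in_window_def P by simp
    ultimately have "deficit (exps_fun (x # M @ X)) (length M) < int K" by blast
    moreover have "deficit (exps_fun (x # M @ X)) (length M) = int (length M) - int (sum_list M)"
      by (simp add: deficit_exps_fun_Cons)
    moreover have "int K < int (Suc (length M)) - int (x + sum_list M)"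
      using assms unfolding P by simp
    ultimately show False by linarith
  qed
  then show "exps_fun (P @ X) t = exps_fun (P @ X') t" by (simp add: exps_fun_def nth_append)
qed

lemma rot_right_at_arm_level_window_eq:
  assumes "at_arm_level j rot_right t = Some t'" "j = 0 \<or> K < j"
  shows "window_eq K (leaf_exp t) (leaf_exp t')"
  using assms(2)
proof
  assume "j = 0"
  then have "rot_right t = Some t'" using assms(1) by simp
  then obtain x y M where "leaf_exps t = x # M" "leaf_exps t' = y # M"
    using rot_right_leaf_exps by blast
  then show ?thesis using window_eq_exps_fun_Cons by simp
next
  assume "K < j"
  obtain P X X' where "leaf_exps t = P @ X" "leaf_exps t' = P @ X'"
    "int j \<le> int (length P) - int (sum_list P)"
    using at_arm_level_leaf_exps_prefix[OF assms(1)] by blast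
  then show ?thesis using window_eq_exps_fun_append[of K P] \<open>K < j\<close> by simp
qed

lemma rra_steps_window_eq:
  assumes "\<forall>j\<in>Lv. j = 0 \<or> K < j" "(rra_step Lv)\<^sup>*\<^sup>* t t'"
  shows "window_eq K (leaf_exp t) (leaf_exp t')"
  using assms(2)
proof (induction rule: rtranclp_induct)
  case base
  then show ?case by (rule window_eq_refl)
next
  case (step y z)
  obtain j where j: "j \<in> Lv"
    and rot: "at_arm_level j rot_right y = Some z \<or> at_arm_level j rot_right z = Some y"
    using step.hyps(2) by (rule rra_stepE)
  have level: "j = 0 \<or> K < j" using assms(1) j by blast
  from rot have "window_eq K (leaf_exp y) (leaf_exp z)"
  proof
    assume "at_arm_level j rot_right y = Some z"
    then show ?thesis using rot_right_at_arm_level_window_eq level by blast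
  next
    assume "at_arm_level j rot_right z = Some y"
    then show ?thesis using rot_right_at_arm_level_window_eq level window_eq_sym by blast
  qed
  then show ?case using step.IH window_eq_trans by blast
qed

section \<open>Canonical trees reachable by restricted rotations\<close>

definition hang :: "tree list \<Rightarrow> tree \<Rightarrow> tree" where
  "hang ls S = foldr Nd ls S"

lemma hang_Nil [simp]: "hang [] S = S"
  by (simp add: hang_def)

lemma hang_Cons [simp]: "hang (l # ls) S = Nd l (hang ls S)"
  by (simp add: hang_def)

lemma hang_snoc: "hang (ls @ [l]) S = hang ls (Nd l S)"
  by (simp add: hang_def)

lemma at_arm_level_hang:
  "at_arm_level (length ls + j) f (hang ls S) = map_option (hang ls) (at_arm_level j f S)"
  by (induction ls) (auto simp: option.map_comp comp_def option.map_ident)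

lemma leaf_exps_hang: "leaf_exps (hang ls S) = concat (map sub_exps ls) @ leaf_exps S"
  by (induction ls) auto

lemma hang_split: "\<exists>ls S. T = hang ls S \<and> length ls \<le> m \<and> (length ls < m \<longrightarrow> S = Lf)"
proof (induction m arbitrary: T)
  case 0
  show ?case by (rule exI[of _ "[]"]) simp
next
  case (Suc m)
  show ?case
  proof (cases T)
    case Lf
    show ?thesis using \<open>T = Lf\<close> by (intro exI[of _ "[]"]) simp
  next
    case (Nd l r)
    obtain ls S where "r = hang ls S" "length ls \<le> m" "length ls < m \<longrightarrow> S = Lf"
      using Suc.IH by blast
    then show ?thesis using Nd by (intro exI[of _ "l # ls"] exI[of _ S]) simp
  qed
qed

fun is_right_vine :: "tree \<Rightarrow> bool" where
  "is_right_vine Lf \<longleftrightarrow> True"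
| "is_right_vine (Nd l r) \<longleftrightarrow> l = Lf \<and> is_right_vine r"

lemma leaf_exps_right_vine: "is_right_vine V \<Longrightarrow> x \<in> set (leaf_exps V) \<Longrightarrow> x = 0"
  by (induction V) auto

lemma rra_steps_deep_rotation:
  assumes "0 \<in> Lv" "k \<in> Lv" "1 \<le> k" "k \<le> j" "at_arm_level j rot_right t = Some t'"
  shows "(rra_step Lv)\<^sup>*\<^sup>* t t'"
  using assms(4,5)
proof (induction j arbitrary: t t' rule: dec_induct)
  case base
  then show ?case using rra_step_if_rot_right[OF assms(2)] by blast
next
  case (step n)
  obtain m where m: "n = Suc m" using step.hyps(1) assms(3) by (cases n) auto
  obtain a b c c' where t: "t = Nd a (Nd b c)" "t' = Nd a (Nd b c')"
    and c: "at_arm_level m rot_right c = Some c'"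
    using step.prems unfolding m at_arm_level_Suc_eq_Some by blast
  have "rra_step Lv t (Nd (Nd a b) c)"
    using sympD[OF symp_rra_step rra_step_if_rot_right[OF assms(1)]] t by simp
  moreover have "(rra_step Lv)\<^sup>*\<^sup>* (Nd (Nd a b) c) (Nd (Nd a b) c')"
    using step.IH[of "Nd (Nd a b) c" "Nd (Nd a b) c'"] c m by simp
  moreover have "rra_step Lv (Nd (Nd a b) c') t'"
    using rra_step_if_rot_right[OF assms(1)] t by simp
  ultimately show ?case by (meson converse_rtranclp_into_rtranclp rtranclp.rtrancl_into_rtrancl)
qed

lemma hang_left_subtree_flatten:
  assumes "\<And>t t'. at_arm_level (length ls) rot_right t = Some t' \<Longrightarrow> R\<^sup>*\<^sup>* t t'"
  shows "\<exists>c'. R\<^sup>*\<^sup>* (hang ls (Nd l c)) (hang ls (Nd Lf c')) \<and>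
           num_nodes c' = num_nodes l + num_nodes c"
proof (induction l arbitrary: c)
  case Lf
  then show ?case by auto
next
  case (Nd a b)
  have "at_arm_level (length ls) rot_right (hang ls (Nd (Nd a b) c)) =
      Some (hang ls (Nd a (Nd b c)))"
    using at_arm_level_hang[of ls 0] by simp
  then have first: "R\<^sup>*\<^sup>* (hang ls (Nd (Nd a b) c)) (hang ls (Nd a (Nd b c)))" by (rule assms)
  obtain c' where "R\<^sup>*\<^sup>* (hang ls (Nd a (Nd b c))) (hang ls (Nd Lf c'))"
    and "num_nodes c' = num_nodes a + num_nodes (Nd b c)"
    using Nd.IH(1)[of "Nd b c"] by blast
  then show ?case using rtranclp_trans[OF first] by (intro exI[of _ c']) simp
qed

lemma hang_right_vine_reachable:
  assumes "\<And>j t t'. k \<le> j \<Longrightarrow> at_arm_level j rot_right t = Some t' \<Longrightarrow> R\<^sup>*\<^sup>* t t'"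
    and "k \<le> length ls"
  shows "\<exists>V. R\<^sup>*\<^sup>* (hang ls S) (hang ls V) \<and> is_right_vine V"
  using assms(2)
proof (induction "num_nodes S" arbitrary: S ls rule: less_induct)
  case less
  show ?case
  proof (cases S)
    case Lf
    then show ?thesis by (intro exI[of _ Lf]) simp
  next
    case (Nd l c)
    obtain c' where flat: "R\<^sup>*\<^sup>* (hang ls S) (hang ls (Nd Lf c'))"
      and n: "num_nodes c' = num_nodes l + num_nodes c"
      using hang_left_subtree_flatten[of ls R l c] assms(1) less.prems Nd by blast
    have "num_nodes c' < num_nodes S" using n Nd by simp
    moreover have "k \<le> length (ls @ [Lf])" using less.prems by simp
    ultimately obtain V where "R\<^sup>*\<^sup>* (hang (ls @ [Lf]) c') (hang (ls @ [Lf]) V)" "is_right_vine V"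
      using less.hyps[of c' "ls @ [Lf]"] by blast
    then show ?thesis
      using rtranclp_trans[OF flat] by (intro exI[of _ "Nd Lf V"]) (simp add: hang_snoc)
  qed
qed

definition window_canonical :: "nat \<Rightarrow> tree \<Rightarrow> bool" where
  "window_canonical K N \<longleftrightarrow>
     N = Lf \<or> (\<exists>ls V. N = Nd Lf (hang ls V) \<and> length ls \<le> K \<and> is_right_vine V)"

lemma window_canonical_reachable:
  assumes "0 \<in> Lv" "Suc K \<in> Lv"
  shows "\<exists>N. (rra_step Lv)\<^sup>*\<^sup>* T N \<and> window_canonical K N"
proof (cases T)
  case Lf
  then show ?thesis unfolding window_canonical_def by blast
next
  case (Nd l c)
  have "\<And>t t'. at_arm_level 0 rot_right t = Some t' \<Longrightarrow> (rra_step Lv)\<^sup>*\<^sup>* t t'"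
    using rra_step_if_rot_right[OF assms(1)] by blast
  then obtain R where R: "(rra_step Lv)\<^sup>*\<^sup>* T (Nd Lf R)"
    using hang_left_subtree_flatten[of "[]" "rra_step Lv" l c] Nd by auto
  obtain ls S where S: "R = hang ls S" "length ls \<le> K" "length ls < K \<longrightarrow> S = Lf"
    using hang_split by blast
  obtain V where V: "(rra_step Lv)\<^sup>*\<^sup>* (hang (Lf # ls) S) (hang (Lf # ls) V)" "is_right_vine V"
  proof (cases "length ls < K")
    case True
    then show ?thesis using that[of S] S(3) by simp
  next
    case False
    have deep: "\<And>j t t'. Suc K \<le> j \<Longrightarrow> at_arm_level j rot_right t = Some t' \<Longrightarrow>
        (rra_step Lv)\<^sup>*\<^sup>* t t'"
      using rra_steps_deep_rotation[OF assms] by simp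
    have "Suc K \<le> length (Lf # ls)" using False by simp
    then have "\<exists>V. (rra_step Lv)\<^sup>*\<^sup>* (hang (Lf # ls) S) (hang (Lf # ls) V) \<and> is_right_vine V"
      by (rule hang_right_vine_reachable[where k = "Suc K", rotated]) (simp add: deep)
    then show ?thesis using that by blast
  qed
  have "(rra_step Lv)\<^sup>*\<^sup>* T (Nd Lf (hang ls V))" using R V(1) S(1) by simp
  moreover have "window_canonical K (Nd Lf (hang ls V))"
    unfolding window_canonical_def using S(2) V(2) by blast
  ultimately show ?thesis by blast
qed

lemma sub_exps_prefix_sum_ge: "v < length (sub_exps l) \<Longrightarrow> v \<le> sum_list (take v (sub_exps l))"
proof (induction l arbitrary: v)
  case Lf
  then show ?case by simp
next
  case (Nd a b)
  obtain x xs where x: "sub_exps a = x # xs" using sub_exps_not_Nil by (cases "sub_exps a") auto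
  have nodes: "length xs = num_nodes a" "x + sum_list xs = num_nodes a"
    using length_sub_exps[of a] sum_list_sub_exps[of a] x by simp_all
  show ?case
  proof (cases "v \<le> length xs")
    case True
    then have "v \<le> sum_list (take v (x # xs))" using Nd.IH(1)[of v] x by simp
    then show ?thesis using x by (cases v) auto
  next
    case False
    define v' where "v' = v - Suc (length xs)"
    have v: "v = Suc (length xs) + v'" using False v'_def by simp
    have "v' < length (sub_exps b)" using Nd.prems x v by simp
    then have "v' \<le> sum_list (take v' (sub_exps b))" by (rule Nd.IH(2))
    then show ?thesis using x v nodes by simp
  qed
qed

lemma hang_prefix_deficit_less:
  "v < length (concat (map sub_exps ls)) \<Longrightarrow>
     int v - int (sum_list (take v (concat (map sub_exps ls)))) < int (length ls)"
proof (induction ls arbitrary: v)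
  case Nil
  then show ?case by simp
next
  case (Cons l ls)
  show ?case
  proof (cases "v < length (sub_exps l)")
    case True
    then show ?thesis using sub_exps_prefix_sum_ge[OF True] by simp
  next
    case False
    define v' where "v' = v - length (sub_exps l)"
    have v: "v = length (sub_exps l) + v'" using False v'_def by simp
    have "int v' - int (sum_list (take v' (concat (map sub_exps ls)))) < int (length ls)"
      using Cons.IH[of v'] Cons.prems v by simp
    then show ?thesis using v length_sub_exps[of l] sum_list_sub_exps[of l] by simp
  qed
qed

lemma window_canonical_leaf_exp_0: "window_canonical K N \<Longrightarrow> leaf_exp N 0 = 0"
  unfolding window_canonical_def by (auto simp: exps_fun_def)

lemma window_canonical_leaf_exp_outside:
  assumes "window_canonical K N" "1 \<le> u" "\<not> in_window K (leaf_exp N) u"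
  shows "leaf_exp N u = 0"
proof (cases "N = Lf")
  case True
  then show ?thesis by (simp add: exps_fun_def)
next
  case False
  then obtain ls V where N: "N = Nd Lf (hang ls V)" "length ls \<le> K" "is_right_vine V"
    using assms(1) unfolding window_canonical_def by blast
  define P where "P = concat (map sub_exps ls)"
  have exps: "leaf_exps N = 0 # P @ leaf_exps V" using N(1) by (simp add: P_def leaf_exps_hang)
  obtain v where v: "v < u" "int K \<le> deficit (leaf_exp N) v"
    using assms(3) unfolding in_window_def by (auto simp: not_less)
  have "length P \<le> v"
  proof (rule ccontr)
    assume "\<not> length P \<le> v"
    then have "deficit (leaf_exp N) v < int (length ls)"
      using hang_prefix_deficit_less[of v ls] unfolding exps deficit_exps_fun_Cons P_def by simp
    then show False using v(2) N(2) by simp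
  qed
  obtain u' where u': "u = Suc u'" using assms(2) by (cases u) auto
  have "leaf_exp N u = exps_fun (P @ leaf_exps V) u'" unfolding exps u' by (rule exps_fun_Cons_Suc)
  also have "\<dots> = 0"
    using \<open>length P \<le> v\<close> v(1) u' leaf_exps_right_vine[OF N(3)]
    by (auto simp: exps_fun_def nth_append)
  finally show ?thesis .
qed

lemma window_canonical_unique:
  assumes "window_canonical K N1" "window_canonical K N2"
    and eq: "window_eq K (leaf_exp N1) (leaf_exp N2)" and "num_nodes N1 = num_nodes N2"
  shows "N1 = N2"
proof -
  have "leaf_exp N1 u = leaf_exp N2 u" for u
  proof (cases "u = 0")
    case True
    then show ?thesis using window_canonical_leaf_exp_0 assms(1,2) by simp
  next
    case False
    show ?thesis
    proof (cases "in_window K (leaf_exp N1) u")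
      case True
      then show ?thesis using eq False unfolding window_eq_def by simp
    next
      case outside: False
      then have "\<not> in_window K (leaf_exp N2) u" using window_eq_in_window_iff[OF eq] by simp
      then show ?thesis using window_canonical_leaf_exp_outside assms(1,2) outside False by simp
    qed
  qed
  moreover have "length (leaf_exps N1) = length (leaf_exps N2)"
    using assms(4) by (simp add: length_leaf_exps)
  ultimately have "leaf_exps N1 = leaf_exps N2"
    by (metis exps_fun_def nth_equalityI)
  then show ?thesis by (rule leaf_exps_inj)
qed

lemma rra_defined_iff_window_eq:
  assumes "0 \<in> Lv" "Suc K \<in> Lv" "\<forall>j\<in>Lv. j = 0 \<or> K < j"
    and "num_nodes T1 = num_nodes T2"
  shows "rra_defined Lv T1 T2 \<longleftrightarrow> window_eq K (leaf_exp T1) (leaf_exp T2)"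
proof
  assume "rra_defined Lv T1 T2"
  then show "window_eq K (leaf_exp T1) (leaf_exp T2)"
    using rra_steps_window_eq[OF assms(3)] unfolding rra_defined_def by blast
next
  assume eq: "window_eq K (leaf_exp T1) (leaf_exp T2)"
  obtain N1 where N1: "(rra_step Lv)\<^sup>*\<^sup>* T1 N1" "window_canonical K N1"
    using window_canonical_reachable[OF assms(1,2)] by blast
  obtain N2 where N2: "(rra_step Lv)\<^sup>*\<^sup>* T2 N2" "window_canonical K N2"
    using window_canonical_reachable[OF assms(1,2)] by blast
  have "window_eq K (leaf_exp N1) (leaf_exp N2)"
    using window_eq_trans[OF window_eq_trans[OF window_eq_sym eq]]
      rra_steps_window_eq[OF assms(3) N1(1)] rra_steps_window_eq[OF assms(3) N2(1)] by blast
  moreover have "num_nodes N1 = num_nodes N2"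
    using rra_steps_num_nodes[OF N1(1)] rra_steps_num_nodes[OF N2(1)] assms(4) by simp
  ultimately have "N1 = N2" using window_canonical_unique N1(2) N2(2) by blast
  moreover have "(rra_step Lv)\<^sup>*\<^sup>* N2 T2" using sympD[OF symp_rtranclp[OF symp_rra_step] N2(1)] .
  ultimately show "rra_defined Lv T1 T2" using N1(1) unfolding rra_defined_def by simp
qed

lemma assoc_word_vanish_beyond:
  "\<forall>j\<ge>Suc (num_nodes T1 + num_nodes T2).
     fst (assoc_word T1 T2) j = 0 \<and> snd (assoc_word T1 T2) j = 0"
  by (simp add: assoc_word_def exps_fun_def length_leaf_exps)

lemma window_eq_iff_no_occurrence:
  assumes "reduce_step\<^sup>*\<^sup>* (assoc_word T1 T2) w" "partially_reduced w"
  shows "window_eq K (leaf_exp T1) (leaf_exp T2) \<longleftrightarrow> \<not> (\<exists>t. 1 \<le> t \<and> t \<le> K \<and> occurs w t)"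
proof -
  have "window_eq K (leaf_exp T1) (leaf_exp T2) \<longleftrightarrow> window_eq K (fst w) (snd w)"
    using reduce_steps_window_eq[OF assms(1)] window_eq_sym by (auto simp: assoc_word_def)
  moreover have "\<forall>j\<ge>Suc (num_nodes T1 + num_nodes T2). fst w j = 0 \<and> snd w j = 0"
    using reduce_steps_vanish_beyond[OF assms(1) assoc_word_vanish_beyond] .
  ultimately show ?thesis
    using window_eq_if_no_occurrence no_occurrence_if_window_eq[OF _ assms(2)] by blast
qed

theorem lemma3p6:
  fixes ilist :: "nat list" and T1 T2 :: tree and w' :: nform
  assumes "ilist \<noteq> []" and "sorted_wrt (<) ilist" and "0 < hd ilist"
    and "num_nodes T1 = num_nodes T2"
    and "reduce_step\<^sup>*\<^sup>* (assoc_word T1 T2) w'" and "partially_reduced w'"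
  shows "((\<exists>t. 1 \<le> t \<and> t \<le> hd ilist - 1 \<and> occurs w' t)
            \<longrightarrow> \<not> rra_defined (insert 0 (set ilist)) T1 T2)
       \<and> (\<not> (\<exists>t. 1 \<le> t \<and> t \<le> hd ilist - 1 \<and> occurs w' t)
            \<longrightarrow> rra_defined (insert 0 (set ilist)) T1 T2)"
proof -
  define K where "K = hd ilist - 1"
  define Lv where "Lv = insert 0 (set ilist)"
  obtain i js where ilist: "ilist = i # js" using assms(1) by (cases ilist) auto
  have i: "i = Suc K" using assms(3) unfolding K_def ilist by simp
  have levels: "0 \<in> Lv" "Suc K \<in> Lv" "\<forall>j\<in>Lv. j = 0 \<or> K < j"
    using assms(2) i unfolding Lv_def ilist by auto
  have "rra_defined Lv T1 T2 \<longleftrightarrow> \<not> (\<exists>t. 1 \<le> t \<and> t \<le> K \<and> occurs w' t)"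
    using rra_defined_iff_window_eq[OF levels assms(4)] window_eq_iff_no_occurrence[OF assms(5,6)]
    by simp
  then show ?thesis unfolding K_def Lv_def by blast
qed

end
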